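(* Let $G$ be a $(P_6,C_5)$-free graph. If $G$ admits a nice coloring, then $G$ is 4-colorable.
   Context: Graphs are finite and simple. A graph is $(P_6,C_5)$-free if it has no induced 6-vertex path and no induced 5-cycle. A partial 4-coloring of $G$ assigns colors from $\{1,2,3,4\}$ to some of the vertices so that adjacent colored vertices get different colors; the other vertices are uncolored. A partial 4-coloring $c$ is nice if (N1) the set of uncolored vertices is an independent set, and (N2) for every uncolored vertex $y$, letting $U=\{u\in N(y): c(u)\in\{1,2\}\}$ and $W=\{w\in N(y): c(w)\in\{3,4\}\}$, we have $N(y)=U\cup W$ and at least one of $U,W$ is an independent set (possibly empty). *)

theory Defs
  imports Main
begin

definition graph :: "'a set \<Rightarrow> ('a \<Rightarrow> 'a \<Rightarrow> bool) \<Rightarrow> bool" where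
  "graph V E \<longleftrightarrow> finite V \<and> (\<forall>u v. E u v \<longrightarrow> u \<in> V \<and> v \<in> V)
     \<and> (\<forall>u v. E u v \<longrightarrow> E v u) \<and> (\<forall>v. \<not> E v v)"

definition nbhd :: "'a set \<Rightarrow> ('a \<Rightarrow> 'a \<Rightarrow> bool) \<Rightarrow> 'a \<Rightarrow> 'a set" where
  "nbhd V E y = {u \<in> V. E y u}"

definition independent :: "('a \<Rightarrow> 'a \<Rightarrow> bool) \<Rightarrow> 'a set \<Rightarrow> bool" where
  "independent E S \<longleftrightarrow> (\<forall>u\<in>S. \<forall>v\<in>S. \<not> E u v)"

definition has_induced_path :: "'a set \<Rightarrow> ('a \<Rightarrow> 'a \<Rightarrow> bool) \<Rightarrow> nat \<Rightarrow> bool" where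
  "has_induced_path V E n \<longleftrightarrow> (\<exists>p :: nat \<Rightarrow> 'a.
     (\<forall>i<n. p i \<in> V) \<and> inj_on p {..<n} \<and>
     (\<forall>i<n. \<forall>j<n. E (p i) (p j) \<longleftrightarrow> (i = j + 1 \<or> j = i + 1)))"

definition has_induced_cycle :: "'a set \<Rightarrow> ('a \<Rightarrow> 'a \<Rightarrow> bool) \<Rightarrow> nat \<Rightarrow> bool" where
  "has_induced_cycle V E n \<longleftrightarrow> (\<exists>p :: nat \<Rightarrow> 'a.
     (\<forall>i<n. p i \<in> V) \<and> inj_on p {..<n} \<and>
     (\<forall>i<n. \<forall>j<n. E (p i) (p j) \<longleftrightarrow> (i = (j + 1) mod n \<or> j = (i + 1) mod n)))"

definition P6_C5_free :: "'a set \<Rightarrow> ('a \<Rightarrow> 'a \<Rightarrow> bool) \<Rightarrow> bool" where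
  "P6_C5_free V E \<longleftrightarrow> \<not> has_induced_path V E 6 \<and> \<not> has_induced_cycle V E 5"

definition partial_4_coloring :: "'a set \<Rightarrow> ('a \<Rightarrow> 'a \<Rightarrow> bool) \<Rightarrow> ('a \<Rightarrow> nat option) \<Rightarrow> bool" where
  "partial_4_coloring V E c \<longleftrightarrow>
     (\<forall>v\<in>V. c v = None \<or> (\<exists>k\<in>{1,2,3,4}. c v = Some k)) \<and>
     (\<forall>u\<in>V. \<forall>v\<in>V. E u v \<longrightarrow> c u \<noteq> None \<longrightarrow> c v \<noteq> None \<longrightarrow> c u \<noteq> c v)"

definition nice_coloring :: "'a set \<Rightarrow> ('a \<Rightarrow> 'a \<Rightarrow> bool) \<Rightarrow> ('a \<Rightarrow> nat option) \<Rightarrow> bool" where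
  "nice_coloring V E c \<longleftrightarrow> partial_4_coloring V E c \<and>
     independent E {v \<in> V. c v = None} \<and>
     (\<forall>y\<in>V. c y = None \<longrightarrow>
        (let U = {u \<in> nbhd V E y. c u \<in> {Some 1, Some 2}};
             W = {w \<in> nbhd V E y. c w \<in> {Some 3, Some 4}}
         in nbhd V E y = U \<union> W \<and> (independent E U \<or> independent E W)))"

definition k_colorable :: "'a set \<Rightarrow> ('a \<Rightarrow> 'a \<Rightarrow> bool) \<Rightarrow> nat \<Rightarrow> bool" where
  "k_colorable V E k \<longleftrightarrow> (\<exists>f :: 'a \<Rightarrow> nat. (\<forall>v\<in>V. f v \<in> {1..k}) \<and>
     (\<forall>u\<in>V. \<forall>v\<in>V. E u v \<longrightarrow> f u \<noteq> f v))"

end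

theory Submission
  imports Defs
begin

text \<open>Let \<open>low\<close> and \<open>high\<close> be the vertices coloured 1,2 and 3,4. Every uncoloured vertex
\<open>y\<close> has an independent neighbourhood in \<open>low\<close> or in \<open>high\<close>; put it into the corresponding
side. It then suffices that each side induces a bipartite graph, which follows by adding the
independent set of uncoloured vertices one at a time. When \<open>y\<close> is added to a bipartite set
\<open>B\<close> in which its neighbourhood is independent, consider a shortest walk in \<open>B\<close> between two
neighbours of \<open>y\<close> of different colours. It is an induced odd path whose only vertices adjacent
to \<open>y\<close> are its ends; length 1 contradicts independence, length 3 closes an induced \<open>C\<^sub>5\<close>
through \<open>y\<close>, and length at least 5 yields an induced \<open>P\<^sub>6\<close> starting at \<open>y\<close>. Hence all
neighbours of \<open>y\<close> in a component of \<open>B\<close> share a colour, and swapping the colours on suitable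
components gives \<open>y\<close> a colour.\<close>

definition walk :: "'a set \<Rightarrow> ('a \<Rightarrow> 'a \<Rightarrow> bool) \<Rightarrow> (nat \<Rightarrow> 'a) \<Rightarrow> nat \<Rightarrow> bool" where
  "walk B E p L \<longleftrightarrow> (\<forall>i\<le>L. p i \<in> B) \<and> (\<forall>i<L. E (p i) (p (Suc i)))"

lemma walk_segment:
  assumes "walk B E p L" "i \<le> j" "j \<le> L"
  shows "walk B E (\<lambda>k. p (i + k)) (j - i)"
  using assms unfolding walk_def by auto

lemma walk_shortcut:
  assumes "walk B E p L" "i + d < L" "E (p i) (p (i + d + 1))"
  shows "walk B E (\<lambda>k. if k \<le> i then p k else p (k + d)) (L - d)"
  unfolding walk_def
proof (intro conjI allI impI)
  fix k assume "k \<le> L - d"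
  then show "(if k \<le> i then p k else p (k + d)) \<in> B"
    using assms unfolding walk_def by auto
next
  fix k assume k: "k < L - d"
  consider "k < i" | "k = i" | "i < k" by arith
  then show "E (if k \<le> i then p k else p (k + d)) (if Suc k \<le> i then p (Suc k) else p (Suc k + d))"
  proof cases
    case 3
    then show ?thesis using assms(1) k unfolding walk_def by (auto dest!: spec[of _ "k + d"])
  qed (use assms k in \<open>auto simp: walk_def\<close>)
qed

definition induced_path_on :: "'a set \<Rightarrow> ('a \<Rightarrow> 'a \<Rightarrow> bool) \<Rightarrow> (nat \<Rightarrow> 'a) \<Rightarrow> nat \<Rightarrow> bool" where
  "induced_path_on V E p n \<longleftrightarrow> (\<forall>i<n. p i \<in> V) \<and> inj_on p {..<n} \<and>
     (\<forall>i<n. \<forall>j<n. E (p i) (p j) \<longleftrightarrow> (i = j + 1 \<or> j = i + 1))"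

lemma has_induced_path_iff: "has_induced_path V E n \<longleftrightarrow> (\<exists>p. induced_path_on V E p n)"
  unfolding has_induced_path_def induced_path_on_def ..

lemma induced_path_on_prefix:
  "induced_path_on V E p n \<Longrightarrow> m \<le> n \<Longrightarrow> induced_path_on V E p m"
  unfolding induced_path_on_def by (auto intro: inj_on_subset)

lemma induced_path_on_mono:
  "induced_path_on B E p n \<Longrightarrow> B \<subseteq> V \<Longrightarrow> induced_path_on V E p n"
  unfolding induced_path_on_def by auto

lemma inj_on_Cons:
  assumes "inj_on p {..<n}" "\<forall>i<n. p i \<noteq> y"
  shows "inj_on (\<lambda>i. if i = 0 then y else p (i - 1)) {..<Suc n}"
  using assms unfolding inj_on_def by (auto simp: less_Suc_eq_0_disj) (metis)+

lemma induced_path_on_Cons: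
  assumes "graph V E" "induced_path_on V E p n" "y \<in> V" "\<forall>i<n. p i \<noteq> y"
    and "\<forall>i<n. E y (p i) \<longleftrightarrow> i = 0"
  shows "induced_path_on V E (\<lambda>i. if i = 0 then y else p (i - 1)) (Suc n)"
proof -
  have sym: "E u v \<longleftrightarrow> E v u" and irr: "\<not> E v v" for u v
    using assms(1) unfolding graph_def by blast+
  show ?thesis
    using assms(2-5) inj_on_Cons[of p n y] unfolding induced_path_on_def
    by (auto simp: less_Suc_eq_0_disj sym[of _ y] irr)
qed

lemma cyclically_adjacent_iff:
  assumes "i \<le> n" "j \<le> n"
  shows "(i = (j + 1) mod Suc n \<or> j = (i + 1) mod Suc n) \<longleftrightarrow>
    (i = j + 1 \<or> j = i + 1 \<or> (i = 0 \<and> j = n) \<or> (i = n \<and> j = 0))"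
proof -
  have "(k + 1) mod Suc n = (if k = n then 0 else k + 1)" if "k \<le> n" for k
    using that by auto
  then show ?thesis using assms by auto
qed

lemma induced_cycle_close:
  assumes "graph V E" "induced_path_on V E p n" "y \<in> V" "\<forall>i<n. p i \<noteq> y"
    and "\<forall>i<n. E y (p i) \<longleftrightarrow> i = 0 \<or> i = n - 1" "0 < n"
  shows "has_induced_cycle V E (Suc n)"
  unfolding has_induced_cycle_def
proof (intro exI conjI)
  have sym: "E u v \<longleftrightarrow> E v u" and irr: "\<not> E v v" for u v
    using assms(1) unfolding graph_def by blast+
  let ?q = "\<lambda>i. if i = 0 then y else p (i - 1)"
  show "\<forall>i<Suc n. ?q i \<in> V" "inj_on ?q {..<Suc n}"
    using assms(2-4) inj_on_Cons[of p n y] unfolding induced_path_on_def by (auto simp: less_Suc_eq_0_disj)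
  show "\<forall>i<Suc n. \<forall>j<Suc n. E (?q i) (?q j) \<longleftrightarrow> (i = (j + 1) mod Suc n \<or> j = (i + 1) mod Suc n)"
  proof (intro allI impI)
    fix i j assume "i < Suc n" "j < Suc n"
    then have ij: "i \<le> n" "j \<le> n" by auto
    show "E (?q i) (?q j) \<longleftrightarrow> (i = (j + 1) mod Suc n \<or> j = (i + 1) mod Suc n)"
      unfolding cyclically_adjacent_iff[OF ij]
      using ij assms(2,5,6) unfolding induced_path_on_def
      by (auto simp: sym[of _ y] irr)
  qed
qed

definition bicoloring :: "('a \<Rightarrow> 'a \<Rightarrow> bool) \<Rightarrow> 'a set \<Rightarrow> ('a \<Rightarrow> bool) \<Rightarrow> bool" where
  "bicoloring E S g \<longleftrightarrow> (\<forall>u\<in>S. \<forall>v\<in>S. E u v \<longrightarrow> g u \<noteq> g v)"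

lemma walk_bicoloring_parity:
  assumes "walk B E p L" "bicoloring E B g" "k \<le> L"
  shows "g (p k) = g (p 0) \<longleftrightarrow> even k"
  using assms(3)
proof (induction k)
  case (Suc k)
  have "p k \<in> B" "p (Suc k) \<in> B" "E (p k) (p (Suc k))"
    using assms(1) Suc.prems unfolding walk_def by auto
  then have "g (p (Suc k)) \<noteq> g (p k)"
    using assms(2) unfolding bicoloring_def by metis
  then show ?case using Suc by auto
qed simp

definition discordant_walk ::
  "'a set \<Rightarrow> ('a \<Rightarrow> 'a \<Rightarrow> bool) \<Rightarrow> 'a \<Rightarrow> ('a \<Rightarrow> bool) \<Rightarrow> (nat \<Rightarrow> 'a) \<Rightarrow> nat \<Rightarrow> bool" where
  "discordant_walk B E y g p L \<longleftrightarrow>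
     walk B E p L \<and> E y (p 0) \<and> E y (p L) \<and> g (p 0) \<noteq> g (p L)"

lemma shortest_discordant_walk_induced:
  assumes G: "graph V E" and p: "discordant_walk B E y g p L"
    and shortest: "\<And>q M. discordant_walk B E y g q M \<Longrightarrow> L \<le> M"
  shows "induced_path_on B E p (Suc L)" and "\<forall>k\<le>L. E y (p k) \<longleftrightarrow> k = 0 \<or> k = L"
proof -
  have sym: "E u v \<Longrightarrow> E v u" and irr: "\<not> E v v" for u v
    using G unfolding graph_def by blast+
  have w: "walk B E p L" and ends: "E y (p 0)" "E y (p L)" "g (p 0) \<noteq> g (p L)"
    using p unfolding discordant_walk_def by auto
  have shortcut: False
    if "i + d < L" "0 < d" "E (p i) (p (i + d + 1))" for i d
  proof -
    let ?q = "\<lambda>k. if k \<le> i then p k else p (k + d)"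
    have "discordant_walk B E y g ?q (L - d)"
      using walk_shortcut[OF w that(1,3)] ends that(1) unfolding discordant_walk_def by auto
    with shortest[of ?q "L - d"] that(1,2) show False by auto
  qed
  have segment: False if "i \<le> j" "j \<le> L" "j - i < L" "E y (p i)" "E y (p j)" "g (p i) \<noteq> g (p j)" for i j
    using shortest[of "\<lambda>k. p (i + k)" "j - i"] walk_segment[OF w that(1,2)] that
    unfolding discordant_walk_def by simp
  have interior: "\<not> E y (p k)" if "0 < k" "k < L" for k
    using segment[of 0 k] segment[of k L] ends that by fastforce
  have no_chord: "\<not> E (p i) (p j)" if "Suc i < j" "j \<le> L" for i j
  proof
    assume "E (p i) (p j)"
    moreover have "i + (j - i - 1) + 1 = j" "i + (j - i - 1) < L" "0 < j - i - 1" using that by auto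
    ultimately show False using shortcut[of i "j - i - 1"] by simp
  qed
  have no_repeat: "p i \<noteq> p j" if "i < j" "j \<le> L" for i j
  proof
    assume eq: "p i = p j"
    show False
    proof (cases "j = L")
      case True
      then show False using segment[of 0 i] eq ends that by auto
    next
      case False
      have "E (p j) (p (j + 1))" using w that False unfolding walk_def by auto
      then show False using shortcut[of i "j - i"] eq that False by auto
    qed
  qed
  have "E (p i) (p j) \<longleftrightarrow> (i = j + 1 \<or> j = i + 1)" if "i \<le> L" "j \<le> L" for i j
  proof
    assume "E (p i) (p j)"
    then show "i = j + 1 \<or> j = i + 1"
      using no_chord[of i j] no_chord[of j i] sym irr that by (metis Suc_eq_plus1 linorder_neqE_nat not_less_eq)
  next
    assume "i = j + 1 \<or> j = i + 1"
    then show "E (p i) (p j)" using w sym that unfolding walk_def by auto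
  qed
  moreover have "inj_on p {..<Suc L}"
    using no_repeat by (metis inj_onI lessThan_iff less_Suc_eq_le linorder_neqE_nat)
  ultimately show "induced_path_on B E p (Suc L)"
    using w unfolding induced_path_on_def walk_def by auto
  show "\<forall>k\<le>L. E y (p k) \<longleftrightarrow> k = 0 \<or> k = L"
    using interior ends by (auto simp: le_less)
qed

lemma no_discordant_walk:
  assumes G: "graph V E" and F: "P6_C5_free V E" and B: "B \<subseteq> V" "y \<in> V" "y \<notin> B"
    and g: "bicoloring E B g" and N: "independent E {u \<in> B. E y u}"
  shows "\<not> discordant_walk B E y g p L"
proof
  assume "discordant_walk B E y g p L"
  then have ex: "\<exists>L p. discordant_walk B E y g p L" by blast
  define L0 where "L0 = (LEAST L. \<exists>p. discordant_walk B E y g p L)"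
  obtain q where q: "discordant_walk B E y g q L0"
    using LeastI_ex[OF ex] unfolding L0_def by blast
  have shortest: "L0 \<le> M" if "discordant_walk B E y g r M" for r M
    unfolding L0_def using that by (blast intro: Least_le)
  have path: "induced_path_on V E q (Suc L0)"
    using induced_path_on_mono[OF shortest_discordant_walk_induced(1)[OF G q shortest] B(1)] .
  have y_adj: "\<forall>k\<le>L0. E y (q k) \<longleftrightarrow> k = 0 \<or> k = L0"
    using shortest_discordant_walk_induced(2)[OF G q shortest] .
  have w: "walk B E q L0" and ends: "E y (q 0)" "E y (q L0)" "g (q 0) \<noteq> g (q L0)"
    using q unfolding discordant_walk_def by auto
  have q_ne_y: "\<forall>k<Suc L0. q k \<noteq> y"
    using w B(3) unfolding walk_def by auto
  have "odd L0" using walk_bicoloring_parity[OF w g order_refl] ends(3) by auto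
  moreover have "L0 \<noteq> 1"
  proof
    assume "L0 = 1"
    then have "E (q 0) (q 1)" "q 0 \<in> B" "q 1 \<in> B" using w unfolding walk_def by auto
    then show False using N ends \<open>L0 = 1\<close> unfolding independent_def by blast
  qed
  ultimately have "L0 = 3 \<or> 5 \<le> L0" by presburger
  then show False
  proof
    assume "L0 = 3"
    then have "has_induced_cycle V E 5"
      using induced_cycle_close[OF G path B(2) q_ne_y] y_adj by simp
    then show False using F unfolding P6_C5_free_def by blast
  next
    assume long: "5 \<le> L0"
    have "induced_path_on V E q 5" using induced_path_on_prefix[OF path] long by auto
    then have "induced_path_on V E (\<lambda>i. if i = 0 then y else q (i - 1)) 6"
      using induced_path_on_Cons[OF G _ B(2), of q 5] q_ne_y y_adj long by simp
    then have "has_induced_path V E 6" unfolding has_induced_path_iff by blast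
    then show False using F unfolding P6_C5_free_def by blast
  qed
qed

definition connected_in :: "'a set \<Rightarrow> ('a \<Rightarrow> 'a \<Rightarrow> bool) \<Rightarrow> 'a \<Rightarrow> 'a \<Rightarrow> bool" where
  "connected_in B E u v \<longleftrightarrow> (\<exists>p L. walk B E p L \<and> p 0 = u \<and> p L = v)"

lemma connected_in_refl: "u \<in> B \<Longrightarrow> connected_in B E u u"
  unfolding connected_in_def walk_def by (rule exI[of _ "\<lambda>_. u"], rule exI[of _ 0]) auto

lemma connected_in_step:
  assumes "connected_in B E u v" "E v w" "w \<in> B"
  shows "connected_in B E u w"
proof -
  obtain p L where p: "walk B E p L" "p 0 = u" "p L = v"
    using assms(1) unfolding connected_in_def by blast
  let ?q = "\<lambda>i. if i \<le> L then p i else w"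
  have "walk B E ?q (Suc L)"
    using p assms(2,3) unfolding walk_def by (auto simp: less_Suc_eq le_Suc_eq)
  moreover have "?q 0 = u" "?q (Suc L) = w" using p by auto
  ultimately show ?thesis unfolding connected_in_def by blast
qed

lemma bicoloring_insert:
  assumes G: "graph V E" and F: "P6_C5_free V E" and B: "B \<subseteq> V" "y \<in> V" "y \<notin> B"
    and g: "bicoloring E B g" and N_indep: "independent E {u \<in> B. E y u}"
  shows "\<exists>h. bicoloring E (insert y B) h"
proof -
  have sym: "E u v \<Longrightarrow> E v u" and irr: "\<not> E v v" for u v
    using G unfolding graph_def by blast+
  define N where "N = {u \<in> B. E y u}"
  have same_colour: "g n1 = g n2" if n: "n1 \<in> N" "n2 \<in> N" and "connected_in B E n1 n2" for n1 n2
  proof -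
    obtain p L where "walk B E p L" "p 0 = n1" "p L = n2"
      using \<open>connected_in B E n1 n2\<close> unfolding connected_in_def by blast
    with no_discordant_walk[OF G F B g N_indep, of p L] n show ?thesis
      unfolding N_def discordant_walk_def by auto
  qed
  define flipped where "flipped v \<longleftrightarrow> (\<exists>n\<in>N. g n \<and> connected_in B E n v)" for v
  define h where "h v \<longleftrightarrow> v = y \<or> g v \<noteq> flipped v" for v
  have flipped_edge: "flipped u \<longleftrightarrow> flipped v" if "u \<in> B" "v \<in> B" "E u v" for u v
    using connected_in_step[of B E _ u v] connected_in_step[of B E _ v u] that sym
    unfolding flipped_def by blast
  have h_N: "\<not> h n" if "n \<in> N" for n
  proof -
    have n: "n \<in> B" "n \<noteq> y" using that B(3) unfolding N_def by auto
    have "g n \<longleftrightarrow> flipped n"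
      using connected_in_refl[OF n(1), of E] same_colour[OF _ that] that unfolding flipped_def by blast
    then show ?thesis using n unfolding h_def by simp
  qed
  have "bicoloring E (insert y B) h"
    unfolding bicoloring_def
  proof (intro ballI impI)
    fix u v assume u: "u \<in> insert y B" and v: "v \<in> insert y B" and e: "E u v"
    consider "u = y" | "v = y" | "u \<in> B" "v \<in> B" "u \<noteq> y" "v \<noteq> y"
      using u v by blast
    then show "h u \<noteq> h v"
    proof cases
      case 1
      then have "v \<in> N" using v e irr unfolding N_def by auto
      then show ?thesis using h_N 1 unfolding h_def by auto
    next
      case 2
      then have "u \<in> N" using u e irr sym unfolding N_def by auto
      then show ?thesis using h_N 2 unfolding h_def by auto
    next
      case 3
      then show ?thesis using flipped_edge[OF 3(1,2) e] g e unfolding bicoloring_def h_def by auto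
    qed
  qed
  then show ?thesis by blast
qed

lemma bicoloring_Un_independent:
  assumes G: "graph V E" and F: "P6_C5_free V E" and "finite Y" "A \<subseteq> V" "Y \<subseteq> V" "A \<inter> Y = {}"
    and "independent E Y" "\<forall>y\<in>Y. independent E {u \<in> A. E y u}" "bicoloring E A f"
  shows "\<exists>g. bicoloring E (A \<union> Y) g"
  using assms(3-9)
proof (induction Y rule: finite_induct)
  case empty
  then show ?case by auto
next
  case (insert y Y)
  have "independent E Y" using insert.prems(4) unfolding independent_def by blast
  then obtain g where g: "bicoloring E (A \<union> Y) g" using insert by auto
  have "{u \<in> A \<union> Y. E y u} = {u \<in> A. E y u}"
    using insert.prems(4) unfolding independent_def by blast
  then have "independent E {u \<in> A \<union> Y. E y u}" using insert.prems(5) by simp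
  moreover have "A \<union> Y \<subseteq> V" "y \<in> V" "y \<notin> A \<union> Y" using insert by auto
  ultimately obtain h where "bicoloring E (insert y (A \<union> Y)) h"
    using bicoloring_insert[OF G F _ _ _ g] by blast
  then show ?case by auto
qed

lemma k_colorable_4_if_two_bicolorings:
  assumes "V \<subseteq> S \<union> T" "bicoloring E S g1" "bicoloring E T g2"
  shows "k_colorable V E 4"
  unfolding k_colorable_def
proof (intro exI conjI ballI impI)
  define h where "h v = (if v \<in> S then (if g1 v then 1 else 2) else if g2 v then 3 else (4::nat))" for v
  show "h v \<in> {1..4}" for v unfolding h_def by auto
  fix u v assume "u \<in> V" "v \<in> V" "E u v"
  then have "u \<in> S \<or> u \<in> T" "v \<in> S \<or> v \<in> T" using assms(1) by auto
  then show "h u \<noteq> h v"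
    using assms(2,3) \<open>E u v\<close> unfolding bicoloring_def h_def by (auto split: if_splits)
qed

lemma bicoloring_colour_pair_with_uncoloured:
  assumes G: "graph V E" and F: "P6_C5_free V E" and c: "partial_4_coloring V E c"
    and uncoloured: "independent E {v \<in> V. c v = None}"
    and S: "S = {v \<in> V. c v \<in> {Some a, Some b}}"
  shows "\<exists>g. bicoloring E (S \<union> {y \<in> V. c y = None \<and> independent E {u \<in> S. E y u}}) g"
proof (rule bicoloring_Un_independent[OF G F])
  show "finite {y \<in> V. c y = None \<and> independent E {u \<in> S. E y u}}"
    using G unfolding graph_def by simp
  show "independent E {y \<in> V. c y = None \<and> independent E {u \<in> S. E y u}}"
    using uncoloured unfolding independent_def by auto
  show "bicoloring E S (\<lambda>v. c v = Some a)"
    using c unfolding S bicoloring_def partial_4_coloring_def by fastforce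
qed (auto simp: S)

theorem lemma4:
  fixes V :: "'a set" and E :: "'a \<Rightarrow> 'a \<Rightarrow> bool"
  assumes "graph V E"
    and "P6_C5_free V E"
    and "\<exists>c. nice_coloring V E c"
  shows "k_colorable V E 4"
proof -
  obtain c where c: "nice_coloring V E c" using assms(3) by blast
  define low where "low = {v \<in> V. c v \<in> {Some 1, Some 2}}"
  define high where "high = {v \<in> V. c v \<in> {Some 3, Some 4}}"
  have "{u \<in> nbhd V E y. c u \<in> {Some 1, Some 2}} = {u \<in> low. E y u}"
    and "{u \<in> nbhd V E y. c u \<in> {Some 3, Some 4}} = {u \<in> high. E y u}" for y
    unfolding nbhd_def low_def high_def by auto
  then have pc: "partial_4_coloring V E c" and uncoloured: "independent E {v \<in> V. c v = None}"
    and nice: "\<forall>y\<in>V. c y = None \<longrightarrow> independent E {u \<in> low. E y u} \<or> independent E {u \<in> high. E y u}"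
    using c unfolding nice_coloring_def Let_def by auto
  let ?low_side = "low \<union> {y \<in> V. c y = None \<and> independent E {u \<in> low. E y u}}"
  let ?high_side = "high \<union> {y \<in> V. c y = None \<and> independent E {u \<in> high. E y u}}"
  obtain g1 where "bicoloring E ?low_side g1"
    using bicoloring_colour_pair_with_uncoloured[OF assms(1,2) pc uncoloured low_def] by blast
  moreover obtain g2 where "bicoloring E ?high_side g2"
    using bicoloring_colour_pair_with_uncoloured[OF assms(1,2) pc uncoloured high_def] by blast
  moreover have "V \<subseteq> ?low_side \<union> ?high_side"
  proof
    fix v assume v: "v \<in> V"
    then have "v \<in> low \<or> v \<in> high \<or> c v = None"
      using pc unfolding partial_4_coloring_def low_def high_def by auto
    then show "v \<in> ?low_side \<union> ?high_side" using nice v by blast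
  qed
  ultimately show ?thesis using k_colorable_4_if_two_bicolorings by blast
qed

end
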